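(* Let $(X,d)$ be a metric space, let $x_0\in X$ and $r\ge 0$, and let $C_{x_0,r}=\{x\in X: d(x_0,x)=r\}$. Define $\varphi:X\to[0,\infty)$ by $\varphi(x)=d(x,x_0)$ for all $x\in X$. If there exists a self-mapping $T:X\to X$ satisfying (C1) $d(x,Tx)\le \varphi(x)-\varphi(Tx)$ and (C2) $d(Tx,x_0)\ge r$ for each $x\in C_{x_0,r}$, then $C_{x_0,r}$ is a fixed circle of $T$, i.e. $Tx=x$ for every $x\in C_{x_0,r}$.
   Context: For a metric space $(X,d)$, the circle with center $x_0\in X$ and radius $r$ is $C_{x_0,r}=\{x\in X: d(x_0,x)=r\}$. For a self-mapping $T:X\to X$, the circle $C_{x_0,r}$ is called a fixed circle of $T$ if $Tx=x$ for every $x\in C_{x_0,r}$. *)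

theory Defs
  imports "HOL-Analysis.Analysis"
begin

definition circle :: "'a::metric_space \<Rightarrow> real \<Rightarrow> 'a set" where
  "circle x0 r = {x. dist x0 x = r}"

definition fixed_circle :: "('a::metric_space \<Rightarrow> 'a) \<Rightarrow> 'a \<Rightarrow> real \<Rightarrow> bool" where
  "fixed_circle T x0 r \<longleftrightarrow> (\<forall>x\<in>circle x0 r. T x = x)"

end

theory Submission
  imports Defs
begin

text \<open>On the circle, (C2) says \<open>\<phi>(Tx) \<ge> r = \<phi>(x)\<close>, so the right-hand side of (C1) is
  nonpositive and forces \<open>d(x,Tx) = 0\<close>.\<close>

lemma fixed_point_if_dist_le_decrease:
  fixes x y :: "'a::metric_space"
  assumes "dist x y \<le> dist x x0 - dist y x0"
    and "dist y x0 \<ge> dist x x0"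
  shows "y = x"
proof -
  have "dist x y \<le> 0" using assms by linarith
  then show ?thesis by simp
qed

theorem theorem2p2:
  fixes T :: "'a::metric_space \<Rightarrow> 'a" and x0 :: 'a and r :: real and \<phi> :: "'a \<Rightarrow> real"
  assumes "r \<ge> 0"
    and "\<And>x. \<phi> x = dist x x0"
    and C1: "\<And>x. x \<in> circle x0 r \<Longrightarrow> dist x (T x) \<le> \<phi> x - \<phi> (T x)"
    and C2: "\<And>x. x \<in> circle x0 r \<Longrightarrow> dist (T x) x0 \<ge> r"
  shows "fixed_circle T x0 r"
  unfolding fixed_circle_def
proof
  fix x assume x: "x \<in> circle x0 r"
  then have "dist x x0 = r" by (simp add: circle_def dist_commute)
  then show "T x = x"
    using fixed_point_if_dist_le_decrease C1[OF x] C2[OF x] assms(2) by metis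
qed

end
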